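(* Let $T_0 \in \mathcal{G}(X)$ be antiperiodic. Then the complement $\mathcal{G}_{T_0}\setminus\mathcal{S}_{T_0}$ is dense in $\mathcal{G}_{T_0}$.
   Context: Let $(X,m)$ and $(Y,\nu)$ both be the unit interval with Lebesgue measure, and $(Z,\mu) = (X\times Y, m\times\nu)$. $\mathcal{G}(W)$ denotes the set of invertible measure-preserving transformations of a space $W$, with the weak topology ($T_n \to T$ iff $\mu(T_nE \triangle TE) \to 0$ for every measurable $E$). $T_0$ is antiperiodic if its set of periodic points has measure zero. $\mathcal{G}_{T_0} \subset \mathcal{G}(Z)$ is the set of transformations of the form $T(x,y) = (T_0x, T_x y)$ with $T_x \in \mathcal{G}(Y)$ (extensions of $T_0$), with the relative weak topology; $T_0$ is identified with $T_0\times\mathrm{id}_Y$. $\mathbb{E}(\cdot|X)$ is conditional expectation onto the $\sigma$-algebra of sets $B\times Y$. $L^2(Z|X)$ is the space of $f\in L^2(Z)$ with $\mathbb{E}(|f|^2|X)^{1/2} \in L^\infty(X)$. $T\in\mathcal{G}_{T_0}$ is a strongly mixing extension of $T_0$ if for all $f,g\in L^2(Z|X)$, $\lim_{n\to\infty}\|\mathbb{E}(T^n f\cdot\overline{g}|X) - T_0^n\mathbb{E}(f|X)\mathbb{E}(\overline{g}|X)\|_{L^2(X)} = 0$, where $T^nf = f\circ T^n$; $\mathcal{S}_{T_0}$ is the set of such extensions. *)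

theory Defs
  imports "HOL-Probability.Probability"
begin

text \<open>X = Y = unit interval with (Borel) Lebesgue measure; Z = X x Y with product measure.\<close>

definition IX :: "real measure" where
  "IX = restrict_space lborel {0..1}"

definition IZ :: "(real \<times> real) measure" where
  "IZ = IX \<Otimes>\<^sub>M IX"

definition meas_pres :: "'a measure \<Rightarrow> ('a \<Rightarrow> 'a) \<Rightarrow> bool" where
  "meas_pres W T \<longleftrightarrow> T \<in> measurable W W \<and> distr W W T = W"

definition invertible_mpt :: "'a measure \<Rightarrow> ('a \<Rightarrow> 'a) set" where
  "invertible_mpt W = {T. bij_betw T (space W) (space W) \<and> meas_pres W T
      \<and> meas_pres W (the_inv_into (space W) T)}"

definition weak_nbhd :: "'a measure \<Rightarrow> ('a \<Rightarrow> 'a) \<Rightarrow> 'a set set \<Rightarrow> real \<Rightarrow> ('a \<Rightarrow> 'a) set" where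
  "weak_nbhd W T F e = {S \<in> invertible_mpt W. \<forall>E\<in>F. measure W ((S ` E - T ` E) \<union> (T ` E - S ` E)) < e}"

definition weak_open :: "'a measure \<Rightarrow> ('a \<Rightarrow> 'a) set \<Rightarrow> bool" where
  "weak_open W U \<longleftrightarrow> U \<subseteq> invertible_mpt W \<and>
     (\<forall>T\<in>U. \<exists>F e. finite F \<and> F \<subseteq> sets W \<and> e > 0 \<and> weak_nbhd W T F e \<subseteq> U)"

lemma istopology_weak_open: "istopology (weak_open W)"
  unfolding istopology_def
proof safe
  fix U V assume U: "weak_open W U" and V: "weak_open W V"
  show "weak_open W (U \<inter> V)"
    unfolding weak_open_def
  proof safe
    fix T assume "T \<in> U" "T \<in> V"
    then obtain F1 e1 F2 e2 where 1: "finite F1" "F1 \<subseteq> sets W" "e1 > 0" "weak_nbhd W T F1 e1 \<subseteq> U"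
      and 2: "finite F2" "F2 \<subseteq> sets W" "e2 > 0" "weak_nbhd W T F2 e2 \<subseteq> V"
      using U V unfolding weak_open_def by meson
    have "weak_nbhd W T (F1 \<union> F2) (min e1 e2) \<subseteq> weak_nbhd W T F1 e1"
         "weak_nbhd W T (F1 \<union> F2) (min e1 e2) \<subseteq> weak_nbhd W T F2 e2"
      unfolding weak_nbhd_def by fastforce+
    then show "\<exists>F e. finite F \<and> F \<subseteq> sets W \<and> e > 0 \<and> weak_nbhd W T F e \<subseteq> U \<inter> V"
      using 1 2 by (intro exI[of _ "F1 \<union> F2"] exI[of _ "min e1 e2"]) auto
  qed (use U in \<open>auto simp: weak_open_def\<close>)
next
  fix K assume K: "\<forall>U\<in>K. weak_open W U"
  show "weak_open W (\<Union>K)"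
    unfolding weak_open_def
  proof safe
    fix T U assume "T \<in> U" "U \<in> K"
    with K obtain F e where "finite F" "F \<subseteq> sets W" "e > 0" "weak_nbhd W T F e \<subseteq> U"
      unfolding weak_open_def by meson
    with \<open>U \<in> K\<close> show "\<exists>F e. finite F \<and> F \<subseteq> sets W \<and> e > 0 \<and> weak_nbhd W T F e \<subseteq> \<Union>K"
      by blast
  qed (use K in \<open>auto simp: weak_open_def\<close>)
qed

definition weak_topology :: "'a measure \<Rightarrow> ('a \<Rightarrow> 'a) topology" where
  "weak_topology W = topology (weak_open W)"

definition antiperiodic :: "'a measure \<Rightarrow> ('a \<Rightarrow> 'a) \<Rightarrow> bool" where
  "antiperiodic W T0 \<longleftrightarrow> {x \<in> space W. \<exists>n>0. (T0 ^^ n) x = x} \<in> null_sets W"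

definition extensions :: "(real \<Rightarrow> real) \<Rightarrow> (real \<times> real \<Rightarrow> real \<times> real) set" where
  "extensions T0 = {T \<in> invertible_mpt IZ. \<exists>Tx :: real \<Rightarrow> real \<Rightarrow> real.
      (\<forall>x\<in>space IX. Tx x \<in> invertible_mpt IX) \<and>
      (\<forall>x\<in>space IX. \<forall>y\<in>space IX. T (x, y) = (T0 x, Tx x y))}"

text \<open>\<open>T0\<close> identified with \<open>T0 \<times> id\<close>.\<close>

definition lift :: "(real \<Rightarrow> real) \<Rightarrow> (real \<times> real \<Rightarrow> real \<times> real)" where
  "lift T0 = (\<lambda>(x, y). (T0 x, y))"

definition subX :: "(real \<times> real) measure" where
  "subX = vimage_algebra (space IZ) fst IX"

definition cexpX :: "(real \<times> real \<Rightarrow> complex) \<Rightarrow> (real \<times> real \<Rightarrow> complex)" where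
  "cexpX f = (\<lambda>z. complex_of_real (real_cond_exp IZ subX (\<lambda>w. Re (f w)) z)
                 + \<i> * complex_of_real (real_cond_exp IZ subX (\<lambda>w. Im (f w)) z))"

definition L2_rel :: "(real \<times> real \<Rightarrow> complex) \<Rightarrow> bool" where
  "L2_rel f \<longleftrightarrow> f \<in> borel_measurable IZ \<and> integrable IZ (\<lambda>z. (cmod (f z))\<^sup>2) \<and>
     (\<exists>C. AE z in IZ. sqrt (real_cond_exp IZ subX (\<lambda>w. (cmod (f w))\<^sup>2) z) \<le> C)"

text \<open>L2 norm; for functions measurable w.r.t. the X-cylinder algebra this is the L2(X) norm.\<close>

definition L2norm :: "(real \<times> real \<Rightarrow> complex) \<Rightarrow> real" where
  "L2norm h = sqrt (\<integral>z. (cmod (h z))\<^sup>2 \<partial>IZ)"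

definition strongly_mixing_ext :: "(real \<Rightarrow> real) \<Rightarrow> (real \<times> real \<Rightarrow> real \<times> real) \<Rightarrow> bool" where
  "strongly_mixing_ext T0 T \<longleftrightarrow>
     (\<forall>f g. L2_rel f \<and> L2_rel g \<longrightarrow>
        (\<lambda>n. L2norm (\<lambda>z. cexpX (\<lambda>w. f ((T ^^ n) w) * cnj (g w)) z
                        - cexpX f (((lift T0) ^^ n) z) * cexpX (\<lambda>w. cnj (g w)) z))
        \<longlonglongrightarrow> 0)"

definition strongly_mixing_exts :: "(real \<Rightarrow> real) \<Rightarrow> (real \<times> real \<Rightarrow> real \<times> real) set" where
  "strongly_mixing_exts T0 = {T \<in> extensions T0. strongly_mixing_ext T0 T}"

end

theory Submission
  imports Defs
begin

text \<open>Given an extension \<open>T\<close> of \<open>T0\<close> and a set \<open>B \<subseteq> X\<close> of small measure, let \<open>I\<close> be the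
  \<open>T0\<close>-invariant set of points whose orbit visits \<open>B\<close> infinitely often. Over \<open>I\<close>, straightening
  each fibre along the orbit up to its first visit to \<open>B\<close> gives a fibre-preserving \<open>\<Psi>\<close>, and
  \<open>S = \<Psi>\<inverse> \<circ> (T0 \<times> id) \<circ> \<Psi>\<close> on \<open>I \<times> Y\<close>, \<open>S = T\<close> elsewhere, is again an extension of \<open>T0\<close>
  which differs from \<open>T\<close> only on \<open>(I \<inter> B) \<times> Y\<close>, so it is weakly close to \<open>T\<close>. But
  \<open>A = \<Psi>\<inverse>(I \<times> [0, 1/2])\<close> is \<open>S\<close>-invariant with \<open>\<bbbE>(1\<^sub>A|X) = 1\<^sub>I / 2\<close>, so the mixing defect
  of \<open>1\<^sub>A\<close> has constant norm \<open>\<surd>\<mu>(I) / 4 > 0\<close>, and \<open>\<mu>(I) \<ge> \<mu>(B) > 0\<close> by Poincare recurrence.\<close>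

lemma space_IX: "space IX = {0..1}"
  by (simp add: IX_def)

lemma prob_space_IX: "prob_space IX"
  unfolding IX_def by (rule prob_space_restrict_space) auto

lemma space_IZ: "space IZ = {0..1} \<times> {0..1}"
  by (simp add: IZ_def space_pair_measure space_IX)

lemma prob_space_IZ: "prob_space IZ"
  unfolding IZ_def using prob_space_IX by (simp add: prob_space_pair prob_space.axioms)

lemma measurable_fst_IZ: "fst \<in> measurable IZ IX"
  unfolding IZ_def by (rule measurable_fst)

lemma
  assumes "0 \<le> d" "d \<le> (1::real)"
  shows sets_IX_atLeastAtMost: "{0..d} \<in> sets IX"
    and measure_IX_atLeastAtMost: "measure IX {0..d} = d"
proof -
  have "{0..d} = {0..1} \<inter> {0..d}" using assms by auto
  then show "{0..d} \<in> sets IX" unfolding IX_def sets_restrict_space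
    by (metis atLeastAtMost_borel image_eqI sets_lborel)
  have "emeasure IX {0..d} = ennreal d" unfolding IX_def
    using assms by (subst emeasure_restrict_space) auto
  then show "measure IX {0..d} = d" using assms by (simp add: measure_def)
qed

lemma sets_IZ_Times: "C \<in> sets IX \<Longrightarrow> D \<in> sets IX \<Longrightarrow> C \<times> D \<in> sets IZ"
  unfolding IZ_def by (rule pair_measureI)

lemma measure_IZ_Times:
  assumes "C \<in> sets IX" "D \<in> sets IX"
  shows "measure IZ (C \<times> D) = measure IX C * measure IX D"
proof -
  have "emeasure IZ (C \<times> D) = emeasure IX C * emeasure IX D"
    unfolding IZ_def using prob_space_IX
    by (intro sigma_finite_measure.emeasure_pair_measure_Times assms prob_space_imp_sigma_finite)
  then show ?thesis by (simp add: measure_def enn2real_mult)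
qed

lemma funpow_in_set: "(\<And>x. x \<in> S \<Longrightarrow> R x \<in> S) \<Longrightarrow> x \<in> S \<Longrightarrow> (R ^^ n) x \<in> S"
  by (induction n) auto

lemma meas_pres_emeasure:
  assumes "meas_pres W T" "A \<in> sets W"
  shows "emeasure W (T -` A \<inter> space W) = emeasure W A"
proof -
  have "emeasure W A = emeasure (distr W W T) A" using assms by (simp add: meas_pres_def)
  also have "\<dots> = emeasure W (T -` A \<inter> space W)"
    using assms by (intro emeasure_distr) (auto simp: meas_pres_def)
  finally show ?thesis by simp
qed

lemma meas_presI:
  assumes "T \<in> measurable W W"
    and "\<And>A. A \<in> sets W \<Longrightarrow> emeasure W (T -` A \<inter> space W) = emeasure W A"
  shows "meas_pres W T"
  unfolding meas_pres_def
proof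
  show "distr W W T = W"
    by (rule measure_eqI) (auto simp: emeasure_distr assms)
qed (rule assms)

lemma meas_pres_comp:
  assumes T: "meas_pres W T" and S: "meas_pres W S"
  shows "meas_pres W (\<lambda>x. T (S x))"
proof (rule meas_presI)
  have mT: "T \<in> measurable W W" and mS: "S \<in> measurable W W"
    using T S by (auto simp: meas_pres_def)
  then show "(\<lambda>x. T (S x)) \<in> measurable W W" by (rule measurable_compose[rotated])
  fix A assume A: "A \<in> sets W"
  have "(\<lambda>x. T (S x)) -` A \<inter> space W = S -` (T -` A \<inter> space W) \<inter> space W"
    using measurable_space[OF mS] by auto
  then show "emeasure W ((\<lambda>x. T (S x)) -` A \<inter> space W) = emeasure W A"
    using meas_pres_emeasure[OF S measurable_sets[OF mT A]] meas_pres_emeasure[OF T A] by simp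
qed

lemma meas_pres_id: "meas_pres W (\<lambda>x. x)"
  by (rule meas_presI) auto

lemma meas_pres_funpow: "meas_pres W T \<Longrightarrow> meas_pres W (T ^^ n)"
  by (induction n) (simp_all add: meas_pres_id[unfolded id_def[symmetric]] meas_pres_comp comp_def)

section \<open>Recurrence\<close>

definition recurrent_set :: "'a measure \<Rightarrow> ('a \<Rightarrow> 'a) \<Rightarrow> 'a set \<Rightarrow> 'a set" where
  "recurrent_set W R B = {x \<in> space W. \<forall>N. \<exists>k\<ge>N. (R ^^ k) x \<in> B}"

lemma sets_recurrent_set:
  assumes "R \<in> measurable W W" "B \<in> sets W"
  shows "recurrent_set W R B \<in> sets W"
proof -
  have [measurable]: "R ^^ k \<in> measurable W W" for k by (rule measurable_compose_n[OF assms(1)])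
  have [measurable]: "B \<in> sets W" by (rule assms(2))
  show ?thesis unfolding recurrent_set_def by measurable
qed

lemma recurrent_set_step:
  assumes "x \<in> space W" "R x \<in> space W"
  shows "R x \<in> recurrent_set W R B \<longleftrightarrow> x \<in> recurrent_set W R B"
proof
  assume "R x \<in> recurrent_set W R B"
  then have h: "\<forall>N. \<exists>k\<ge>N. (R ^^ Suc k) x \<in> B"
    unfolding recurrent_set_def by (simp add: funpow_swap1)
  have "\<exists>k\<ge>N. (R ^^ k) x \<in> B" for N
    using h by (meson le_SucI)
  then show "x \<in> recurrent_set W R B" using assms unfolding recurrent_set_def by auto
next
  assume "x \<in> recurrent_set W R B"
  then have h: "\<forall>N. \<exists>k\<ge>N. (R ^^ k) x \<in> B" unfolding recurrent_set_def by auto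
  have "\<exists>k\<ge>N. (R ^^ k) (R x) \<in> B" for N
  proof -
    obtain k where k: "k \<ge> Suc N" "(R ^^ k) x \<in> B" using h by blast
    then obtain m where "k = Suc m" by (cases k) auto
    then show ?thesis using k by (intro exI[of _ m]) (auto simp: funpow_swap1)
  qed
  then show "R x \<in> recurrent_set W R B" using assms unfolding recurrent_set_def by auto
qed

lemma measure_le_recurrent_set:
  assumes W: "finite_measure W" and R: "meas_pres W R" and B: "B \<in> sets W"
  shows "measure W B \<le> measure W (recurrent_set W R B)"
proof -
  interpret finite_measure W by (rule W)
  have mR: "R \<in> measurable W W" using R by (simp add: meas_pres_def)
  define F where "F N = {x \<in> space W. \<exists>k\<ge>N. (R ^^ k) x \<in> B}" for N
  have [measurable]: "R ^^ k \<in> measurable W W" for k by (rule measurable_compose_n[OF mR])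
  have [measurable]: "B \<in> sets W" by (rule B)
  have F: "F N \<in> sets W" for N unfolding F_def by measurable
  have shift: "(R ^^ k) ((R ^^ N) x) = (R ^^ (k + N)) x" for k N x
    by (simp add: funpow_add)
  have FN: "F N = (R ^^ N) -` F 0 \<inter> space W" for N
  proof (intro set_eqI iffI)
    fix x assume "x \<in> F N"
    then obtain k where "x \<in> space W" "k \<ge> N" "(R ^^ (k - N + N)) x \<in> B"
      unfolding F_def by auto
    then show "x \<in> (R ^^ N) -` F 0 \<inter> space W"
      unfolding F_def shift[symmetric] using measurable_space[OF measurable_compose_n[OF mR]] by auto
  next
    fix x assume "x \<in> (R ^^ N) -` F 0 \<inter> space W"
    then obtain k where "x \<in> space W" "(R ^^ k) ((R ^^ N) x) \<in> B"
      unfolding F_def by auto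
    then have "x \<in> space W" "(R ^^ (k + N)) x \<in> B" by (simp_all only: shift)
    then show "x \<in> F N" unfolding F_def by (intro CollectI conjI exI[of _ "k + N"]) auto
  qed
  have FN_eq: "emeasure W (F N) = emeasure W (F 0)" for N
    unfolding FN[of N] by (rule meas_pres_emeasure[OF meas_pres_funpow[OF R] F])
  have "decseq F" unfolding decseq_def F_def by (auto intro: order_trans)
  have "recurrent_set W R B = (\<Inter>N. F N)" unfolding recurrent_set_def F_def by auto
  then have "emeasure W (recurrent_set W R B) = (INF N. emeasure W (F N))"
    using F \<open>decseq F\<close> by (simp add: INF_emeasure_decseq image_subset_iff)
  also have "\<dots> = (INF N::nat. emeasure W (F 0))" by (rule INF_cong[OF refl FN_eq])
  also have "\<dots> = emeasure W (F 0)" by simp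
  finally have "measure W (recurrent_set W R B) = measure W (F 0)" by (simp add: measure_def)
  moreover have "B \<subseteq> F 0" unfolding F_def using sets.sets_into_space[OF B] by (auto intro: exI[of _ 0])
  ultimately show ?thesis using F by (metis finite_measure_mono)
qed

lemma invertible_mptD:
  assumes "T \<in> invertible_mpt W"
  shows "bij_betw T (space W) (space W)" "meas_pres W T" "meas_pres W (the_inv_into (space W) T)"
    "T \<in> measurable W W" "the_inv_into (space W) T \<in> measurable W W"
  using assms by (auto simp: invertible_mpt_def meas_pres_def)

lemma invertible_mpt_in_space: "T \<in> invertible_mpt W \<Longrightarrow> x \<in> space W \<Longrightarrow> T x \<in> space W"
  using invertible_mptD(1) bij_betwE by blast

lemma invertible_mpt_the_inv_in_space:
  "T \<in> invertible_mpt W \<Longrightarrow> x \<in> space W \<Longrightarrow> the_inv_into (space W) T x \<in> space W"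
  using invertible_mptD(1) by (metis bij_betw_def the_inv_into_into order_refl)

lemma invertible_mpt_f_the_inv:
  "T \<in> invertible_mpt W \<Longrightarrow> x \<in> space W \<Longrightarrow> T (the_inv_into (space W) T x) = x"
  using invertible_mptD(1) by (metis bij_betw_def f_the_inv_into_f)

lemma invertible_mpt_the_inv_f:
  "T \<in> invertible_mpt W \<Longrightarrow> x \<in> space W \<Longrightarrow> the_inv_into (space W) T (T x) = x"
  using invertible_mptD(1) by (metis bij_betw_def the_inv_into_f_f)

lemma invertible_mpt_inj_on: "T \<in> invertible_mpt W \<Longrightarrow> inj_on T (space W)"
  using invertible_mptD(1) bij_betw_def by blast

lemma invertible_mpt_image_eq_vimage_the_inv:
  assumes "T \<in> invertible_mpt W" "A \<subseteq> space W"
  shows "T ` A = the_inv_into (space W) T -` A \<inter> space W"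
proof
  show "the_inv_into (space W) T -` A \<inter> space W \<subseteq> T ` A"
    using invertible_mpt_f_the_inv[OF assms(1)] by (metis IntD1 IntD2 image_eqI subsetI vimageE)
  show "T ` A \<subseteq> the_inv_into (space W) T -` A \<inter> space W"
    using assms invertible_mpt_the_inv_f[OF assms(1)] invertible_mpt_in_space[OF assms(1)] by auto
qed

lemma
  assumes "T \<in> invertible_mpt W" "A \<in> sets W"
  shows sets_invertible_mpt_image: "T ` A \<in> sets W"
    and emeasure_invertible_mpt_image: "emeasure W (T ` A) = emeasure W A"
  using invertible_mpt_image_eq_vimage_the_inv[OF assms(1) sets.sets_into_space[OF assms(2)]]
    measurable_sets[OF invertible_mptD(5)[OF assms(1)] assms(2)]
    meas_pres_emeasure[OF invertible_mptD(3)[OF assms(1)] assms(2)]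
  by simp_all

lemma measure_invertible_mpt_image:
  "T \<in> invertible_mpt W \<Longrightarrow> A \<in> sets W \<Longrightarrow> measure W (T ` A) = measure W A"
  by (simp add: emeasure_invertible_mpt_image measure_def)

lemma invertible_mptI:
  assumes bij: "bij_betw T (space W) (space W)" and T: "meas_pres W T"
    and inv: "the_inv_into (space W) T \<in> measurable W W"
  shows "T \<in> invertible_mpt W"
proof -
  let ?I = "the_inv_into (space W) T"
  have inj: "inj_on T (space W)" and surj: "T ` space W = space W"
    using bij by (auto simp: bij_betw_def)
  have "meas_pres W ?I"
  proof (rule meas_presI[OF inv])
    fix A assume A: "A \<in> sets W"
    have A': "A \<subseteq> space W" using sets.sets_into_space[OF A] .
    have TA: "?I -` A \<inter> space W = T ` A"
    proof
      show "?I -` A \<inter> space W \<subseteq> T ` A"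
        using f_the_inv_into_f[OF inj] surj by (metis IntD1 IntD2 image_eqI subsetI vimageE)
      show "T ` A \<subseteq> ?I -` A \<inter> space W"
        using A' the_inv_into_f_f[OF inj] surj by auto
    qed
    moreover have "T -` (T ` A) \<inter> space W = A"
      using A' inj by (auto simp: inj_on_def)
    moreover have "T ` A \<in> sets W" using TA measurable_sets[OF inv A] by simp
    ultimately show "emeasure W (?I -` A \<inter> space W) = emeasure W A"
      using meas_pres_emeasure[OF T] by metis
  qed
  then show ?thesis using assms by (auto simp: invertible_mpt_def)
qed

lemma invertible_mpt_id: "(\<lambda>x. x) \<in> invertible_mpt W"
proof (rule invertible_mptI)
  have "the_inv_into (space W) (\<lambda>x. x) x = x" if "x \<in> space W" for x
    using that by (simp add: the_inv_into_f_eq)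
  then show "the_inv_into (space W) (\<lambda>x. x) \<in> measurable W W"
    using measurable_cong[of W "the_inv_into (space W) (\<lambda>x. x)" "\<lambda>x. x"] by simp
qed (simp_all add: bij_betw_def meas_pres_id)

lemma invertible_mpt_comp:
  assumes T: "T \<in> invertible_mpt W" and S: "S \<in> invertible_mpt W"
  shows "(\<lambda>x. T (S x)) \<in> invertible_mpt W"
proof (rule invertible_mptI)
  show bij: "bij_betw (\<lambda>x. T (S x)) (space W) (space W)"
    using bij_betw_trans[OF invertible_mptD(1)[OF S] invertible_mptD(1)[OF T]] by (simp add: comp_def)
  show "meas_pres W (\<lambda>x. T (S x))"
    by (rule meas_pres_comp[OF invertible_mptD(2)[OF T] invertible_mptD(2)[OF S]])
  have "the_inv_into (space W) (\<lambda>x. T (S x)) x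
        = the_inv_into (space W) S (the_inv_into (space W) T x)" if x: "x \<in> space W" for x
    using bij x invertible_mpt_f_the_inv[OF T] invertible_mpt_f_the_inv[OF S]
      invertible_mpt_the_inv_in_space[OF T] invertible_mpt_the_inv_in_space[OF S]
    by (intro the_inv_into_f_eq) (auto simp: bij_betw_def)
  moreover have "(\<lambda>x. the_inv_into (space W) S (the_inv_into (space W) T x)) \<in> measurable W W"
    using invertible_mptD(5)[OF T] invertible_mptD(5)[OF S] by (rule measurable_compose)
  ultimately show "the_inv_into (space W) (\<lambda>x. T (S x)) \<in> measurable W W"
    using measurable_cong by (metis (no_types, lifting))
qed

lemma invertible_mpt_the_inv:
  assumes T: "T \<in> invertible_mpt W"
  shows "the_inv_into (space W) T \<in> invertible_mpt W"
proof (rule invertible_mptI)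
  show "bij_betw (the_inv_into (space W) T) (space W) (space W)"
    using bij_betw_the_inv_into[OF invertible_mptD(1)[OF T]] .
  show "meas_pres W (the_inv_into (space W) T)" using invertible_mptD(3)[OF T] .
  have "the_inv_into (space W) (the_inv_into (space W) T) x = T x" if "x \<in> space W" for x
    using that bij_betw_the_inv_into[OF invertible_mptD(1)[OF T]]
      invertible_mpt_the_inv_f[OF T] invertible_mpt_in_space[OF T] invertible_mpt_inj_on[OF T]
    by (intro the_inv_into_f_eq) (auto simp: bij_betw_def)
  then show "the_inv_into (space W) (the_inv_into (space W) T) \<in> measurable W W"
    using measurable_cong invertible_mptD(4)[OF T] by (metis (no_types, lifting))
qed

lemma invertible_mpt_funpow: "T \<in> invertible_mpt W \<Longrightarrow> T ^^ n \<in> invertible_mpt W"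
  by (induction n)
    (simp_all add: invertible_mpt_id[unfolded id_def[symmetric]] invertible_mpt_comp comp_def)

lemma meas_pres_piecewise:
  fixes \<iota> :: "'a \<Rightarrow> nat"
  assumes G: "\<And>i. meas_pres W (G i)" and \<iota>: "\<iota> \<in> measurable W (count_space UNIV)"
    and pres: "\<And>i z. z \<in> space W \<Longrightarrow> \<iota> (G i z) = i \<longleftrightarrow> \<iota> z = i"
  shows "meas_pres W (\<lambda>z. G (\<iota> z) z)"
proof (rule meas_presI)
  have mG: "G i \<in> measurable W W" for i using G by (simp add: meas_pres_def)
  then show "(\<lambda>z. G (\<iota> z) z) \<in> measurable W W"
    by (rule measurable_compose_countable'[OF _ \<iota>]) auto
  fix A assume A: "A \<in> sets W"
  define Pi where "Pi i = \<iota> -` {i} \<inter> space W" for i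
  have Pi: "Pi i \<in> sets W" for i
    unfolding Pi_def using \<iota> by (simp add: measurable_count_space_eq2_countable)
  define C where "C i = G i -` (A \<inter> Pi i) \<inter> space W" for i
  have C: "C i \<in> sets W" for i
    unfolding C_def using A Pi measurable_sets[OF mG] by blast
  have "(\<lambda>z. G (\<iota> z) z) -` A \<inter> space W = (\<Union>i. C i)"
    unfolding C_def Pi_def using pres measurable_space[OF mG] by auto
  moreover have "disjoint_family C"
    unfolding disjoint_family_on_def C_def Pi_def using pres by auto
  ultimately have "emeasure W ((\<lambda>z. G (\<iota> z) z) -` A \<inter> space W) = (\<Sum>i. emeasure W (C i))"
    using C by (simp add: suminf_emeasure image_subset_iff)
  also have "\<dots> = (\<Sum>i. emeasure W (A \<inter> Pi i))"
    unfolding C_def using A Pi by (intro suminf_cong meas_pres_emeasure[OF G]) auto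
  also have "\<dots> = emeasure W (\<Union>i. A \<inter> Pi i)"
    using A Pi by (intro suminf_emeasure) (auto simp: disjoint_family_on_def Pi_def)
  also have "(\<Union>i. A \<inter> Pi i) = A"
    using sets.sets_into_space[OF A] unfolding Pi_def by auto
  finally show "emeasure W ((\<lambda>z. G (\<iota> z) z) -` A \<inter> space W) = emeasure W A" .
qed

lemma invertible_mpt_piecewise:
  fixes \<iota> :: "'a \<Rightarrow> nat"
  assumes G: "\<And>i. G i \<in> invertible_mpt W" and \<iota>: "\<iota> \<in> measurable W (count_space UNIV)"
    and pres: "\<And>i z. z \<in> space W \<Longrightarrow> \<iota> (G i z) = i \<longleftrightarrow> \<iota> z = i"
  shows "(\<lambda>z. G (\<iota> z) z) \<in> invertible_mpt W"
proof -
  let ?P = "\<lambda>z. G (\<iota> z) z"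
  let ?Q = "\<lambda>w. the_inv_into (space W) (G (\<iota> w)) w"
  have inj: "inj_on ?P (space W)"
  proof (rule inj_onI)
    fix z w assume zw: "z \<in> space W" "w \<in> space W" "?P z = ?P w"
    then have "\<iota> z = \<iota> w" using pres by metis
    then show "z = w" using zw invertible_mpt_inj_on[OF G, of "\<iota> z"] by (auto dest: inj_onD)
  qed
  have Q: "?Q w \<in> space W \<and> ?P (?Q w) = w" if w: "w \<in> space W" for w
  proof -
    have Qw: "?Q w \<in> space W" "G (\<iota> w) (?Q w) = w"
      using invertible_mpt_the_inv_in_space[OF G w] invertible_mpt_f_the_inv[OF G w] by auto
    then have "\<iota> (?Q w) = \<iota> w" using pres[OF Qw(1), of "\<iota> w"] by simp
    with Qw show ?thesis by simp
  qed
  have "?P ` space W = space W"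
  proof
    show "?P ` space W \<subseteq> space W" using invertible_mpt_in_space[OF G] by auto
    show "space W \<subseteq> ?P ` space W"
    proof
      fix w assume "w \<in> space W"
      with Q show "w \<in> ?P ` space W" by (intro rev_image_eqI[of "?Q w"]) auto
    qed
  qed
  then have bij: "bij_betw ?P (space W) (space W)" using inj by (simp add: bij_betw_def)
  have "?Q \<in> measurable W W"
    by (rule measurable_compose_countable'[OF invertible_mptD(5)[OF G] \<iota>]) auto
  moreover have "the_inv_into (space W) ?P \<in> measurable W W \<longleftrightarrow> ?Q \<in> measurable W W"
    by (rule measurable_cong, rule the_inv_into_f_eq[OF inj]) (use Q in auto)
  ultimately have "the_inv_into (space W) ?P \<in> measurable W W" by simp
  moreover have "meas_pres W ?P"
    by (rule meas_pres_piecewise[OF _ \<iota> pres]) (rule invertible_mptD(2)[OF G])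
  ultimately show ?thesis using bij by (blast intro: invertible_mptI)
qed

lemma measure_image_symdiff_le:
  assumes W: "finite_measure W" and S: "S \<in> invertible_mpt W" and T: "T \<in> invertible_mpt W"
    and D: "D \<in> sets W" and E: "E \<in> sets W" and eq: "\<And>z. z \<in> space W - D \<Longrightarrow> S z = T z"
  shows "measure W ((S ` E - T ` E) \<union> (T ` E - S ` E)) \<le> 2 * measure W D"
proof -
  interpret finite_measure W by (rule W)
  have E': "E \<subseteq> space W" using sets.sets_into_space[OF E] .
  have "S ` E - T ` E \<subseteq> S ` D"
  proof
    fix w assume "w \<in> S ` E - T ` E"
    then obtain z where "z \<in> E" "w = S z" "w \<notin> T ` E" by auto
    with E' eq show "w \<in> S ` D" by (metis DiffI image_eqI subsetD)
  qed
  moreover have "T ` E - S ` E \<subseteq> T ` D"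
  proof
    fix w assume "w \<in> T ` E - S ` E"
    then obtain z where "z \<in> E" "w = T z" "w \<notin> S ` E" by auto
    with E' eq show "w \<in> T ` D" by (metis DiffI image_eqI subsetD)
  qed
  moreover have SD: "S ` D \<in> sets W" "T ` D \<in> sets W"
    using sets_invertible_mpt_image[OF S D] sets_invertible_mpt_image[OF T D] .
  ultimately have "measure W ((S ` E - T ` E) \<union> (T ` E - S ` E)) \<le> measure W (S ` D \<union> T ` D)"
    by (intro finite_measure_mono) auto
  also have "\<dots> \<le> measure W (S ` D) + measure W (T ` D)" by (rule measure_Un_le[OF SD])
  finally show ?thesis
    using measure_invertible_mpt_image[OF S D] measure_invertible_mpt_image[OF T D] by simp
qed

section \<open>Skew products over a base map\<close>

definition skew_product ::
    "(real \<Rightarrow> real) \<Rightarrow> (real \<times> real \<Rightarrow> real \<times> real) \<Rightarrow> (real \<Rightarrow> real \<Rightarrow> real) \<Rightarrow> bool" where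
  "skew_product R G g \<longleftrightarrow> (\<forall>x\<in>space IX. g x \<in> invertible_mpt IX) \<and>
     (\<forall>x\<in>space IX. \<forall>y\<in>space IX. G (x, y) = (R x, g x y))"

lemma extensions_skew_product: "extensions T0 = {T \<in> invertible_mpt IZ. \<exists>g. skew_product T0 T g}"
  unfolding extensions_def skew_product_def by auto

lemma skew_productD:
  "skew_product R G g \<Longrightarrow> x \<in> space IX \<Longrightarrow> y \<in> space IX \<Longrightarrow> G (x, y) = (R x, g x y)"
  "skew_product R G g \<Longrightarrow> x \<in> space IX \<Longrightarrow> g x \<in> invertible_mpt IX"
  by (auto simp: skew_product_def)

lemma skew_product_fst: "skew_product R G g \<Longrightarrow> z \<in> space IZ \<Longrightarrow> fst (G z) = R (fst z)"
  by (auto simp: skew_product_def space_IZ space_IX)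

lemma skew_product_id: "skew_product (\<lambda>x. x) (\<lambda>z. z) (\<lambda>x y. y)"
  unfolding skew_product_def using invertible_mpt_id by auto

lemma skew_product_lift: "skew_product R (lift R) (\<lambda>x y. y)"
  unfolding skew_product_def lift_def using invertible_mpt_id by auto

lemma skew_product_comp:
  assumes G: "skew_product R G g" and H: "skew_product Q H h"
    and Q: "\<And>x. x \<in> space IX \<Longrightarrow> Q x \<in> space IX"
  shows "skew_product (\<lambda>x. R (Q x)) (\<lambda>z. G (H z)) (\<lambda>x y. g (Q x) (h x y))"
  unfolding skew_product_def
proof safe
  fix x assume x: "x \<in> space IX"
  show "(\<lambda>y. g (Q x) (h x y)) \<in> invertible_mpt IX"
    by (rule invertible_mpt_comp[OF skew_productD(2)[OF G Q[OF x]] skew_productD(2)[OF H x]])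
  fix y assume y: "y \<in> space IX"
  have "h x y \<in> space IX" by (rule invertible_mpt_in_space[OF skew_productD(2)[OF H x] y])
  then show "G (H (x, y)) = (R (Q x), g (Q x) (h x y))"
    using skew_productD(1)[OF H x y] skew_productD(1)[OF G Q[OF x]] by simp
qed

primrec cocycle :: "(real \<Rightarrow> real \<Rightarrow> real) \<Rightarrow> (real \<Rightarrow> real) \<Rightarrow> nat \<Rightarrow> real \<Rightarrow> real \<Rightarrow> real" where
  "cocycle g R 0 x = (\<lambda>y. y)"
| "cocycle g R (Suc n) x = (\<lambda>y. g ((R ^^ n) x) (cocycle g R n x y))"

lemma skew_product_funpow:
  assumes G: "skew_product R G g" and R: "\<And>x. x \<in> space IX \<Longrightarrow> R x \<in> space IX"
  shows "skew_product (R ^^ n) (G ^^ n) (cocycle g R n)"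
proof (induction n)
  case 0
  then show ?case using skew_product_id by (simp add: id_def)
next
  case (Suc n)
  have "skew_product (\<lambda>x. R ((R ^^ n) x)) (\<lambda>z. G ((G ^^ n) z)) (\<lambda>x y. g ((R ^^ n) x) (cocycle g R n x y))"
    by (rule skew_product_comp[OF G Suc]) (rule funpow_in_set[OF R])
  then show ?case by (simp add: comp_def)
qed

lemma skew_product_cong:
  assumes "skew_product R G g" "\<And>z. z \<in> space IZ \<Longrightarrow> G z = G' z" "\<And>x. x \<in> space IX \<Longrightarrow> R x = R' x"
  shows "skew_product R' G' g"
  using assms unfolding skew_product_def space_IZ space_IX by auto

lemma skew_product_piecewise:
  assumes "\<And>i. skew_product R (G i) (g i)" "\<And>z. z \<in> space IZ \<Longrightarrow> \<iota> z = \<iota>' (fst z)"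
  shows "skew_product R (\<lambda>z. G (\<iota> z) z) (\<lambda>x. g (\<iota>' x) x)"
  using assms unfolding skew_product_def space_IZ space_IX by auto

lemma skew_product_the_inv:
  assumes G: "G \<in> invertible_mpt IZ" and "skew_product (\<lambda>x. x) G g"
  shows "skew_product (\<lambda>x. x) (the_inv_into (space IZ) G) (\<lambda>x. the_inv_into (space IX) (g x))"
  unfolding skew_product_def
proof safe
  fix x assume x: "x \<in> space IX"
  note gx = skew_productD(2)[OF assms(2) x]
  show "the_inv_into (space IX) (g x) \<in> invertible_mpt IX" by (rule invertible_mpt_the_inv[OF gx])
  fix y assume y: "y \<in> space IX"
  let ?y' = "the_inv_into (space IX) (g x) y"
  have y': "?y' \<in> space IX" "g x ?y' = y"
    using invertible_mpt_the_inv_in_space[OF gx y] invertible_mpt_f_the_inv[OF gx y] by auto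
  then have "G (x, ?y') = (x, y)" using skew_productD(1)[OF assms(2) x] by simp
  moreover have "(x, ?y') \<in> space IZ" using x y' by (simp add: space_IZ space_IX)
  ultimately show "the_inv_into (space IZ) G (x, y) = (x, ?y')"
    using invertible_mpt_inj_on[OF G] by (intro the_inv_into_f_eq)
qed

lemma lift_apply [simp]: "lift R (x, y) = (R x, y)"
  by (simp add: lift_def)

lemma lift_funpow: "(lift R ^^ k) (x, y) = ((R ^^ k) x, y)"
  by (induction k) auto

lemma invertible_mpt_lift:
  assumes T0: "T0 \<in> invertible_mpt IX"
  shows "lift T0 \<in> invertible_mpt IZ"
proof (rule invertible_mptI)
  let ?U = "the_inv_into (space IX) T0"
  have inj: "inj_on (lift T0) (space IZ)"
    using invertible_mptD(1)[OF T0] unfolding inj_on_def bij_betw_def space_IX space_IZ by auto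
  have lift_inv: "lift ?U z \<in> space IZ \<and> lift T0 (lift ?U z) = z" if "z \<in> space IZ" for z
    using that invertible_mpt_f_the_inv[OF T0] invertible_mpt_the_inv_in_space[OF T0]
    by (auto simp: space_IZ space_IX)
  have inv: "the_inv_into (space IZ) (lift T0) z = lift ?U z" if "z \<in> space IZ" for z
    using lift_inv[OF that] by (intro the_inv_into_f_eq[OF inj]) auto
  have "lift T0 ` space IZ = space IZ"
  proof
    show "lift T0 ` space IZ \<subseteq> space IZ"
      using invertible_mpt_in_space[OF T0] by (auto simp: space_IZ space_IX)
    show "space IZ \<subseteq> lift T0 ` space IZ"
    proof
      fix z assume "z \<in> space IZ"
      with lift_inv show "z \<in> lift T0 ` space IZ" by (intro rev_image_eqI[of "lift ?U z"]) auto
    qed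
  qed
  with inj show "bij_betw (lift T0) (space IZ) (space IZ)" by (simp add: bij_betw_def)
  have [measurable]: "T0 \<in> measurable IX IX" "?U \<in> measurable IX IX"
    using invertible_mptD(4,5)[OF T0] by auto
  have "distr IX IX T0 \<Otimes>\<^sub>M distr IX IX (\<lambda>y. y) = distr IZ IZ (lift T0)"
    unfolding IZ_def lift_def using prob_space_IX
    by (intro pair_measure_distr) (auto simp: distr_id prob_space_imp_sigma_finite)
  then have "distr IZ IZ (lift T0) = IZ"
    using invertible_mptD(2)[OF T0] by (simp add: meas_pres_def distr_id IZ_def)
  moreover have "lift T0 \<in> measurable IZ IZ" unfolding IZ_def lift_def by measurable
  ultimately show "meas_pres IZ (lift T0)" by (simp add: meas_pres_def)
  have "lift ?U \<in> measurable IZ IZ" unfolding IZ_def lift_def by measurable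
  moreover have "the_inv_into (space IZ) (lift T0) \<in> measurable IZ IZ \<longleftrightarrow> lift ?U \<in> measurable IZ IZ"
    by (rule measurable_cong) (rule inv)
  ultimately show "the_inv_into (space IZ) (lift T0) \<in> measurable IZ IZ" by simp
qed

section \<open>Conditional expectation onto the base\<close>

lemma sets_subX: "sets subX = {fst -` C \<inter> space IZ | C. C \<in> sets IX}"
  unfolding subX_def by (rule sets_vimage_algebra2) (auto simp: space_IZ space_IX)

lemma measurable_fst_subX: "fst \<in> measurable subX IX"
  unfolding subX_def by (rule measurable_vimage_algebra1) (auto simp: space_IZ space_IX)

lemma sigma_finite_subalgebra_subX: "sigma_finite_subalgebra IZ subX"
proof -
  interpret prob_space IZ by (rule prob_space_IZ)
  have "subalgebra IZ subX"
    unfolding subalgebra_def sets_subX using measurable_sets[OF measurable_fst_IZ]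
    by (auto simp: subX_def)
  then have "finite_measure_subalgebra IZ subX"
    unfolding finite_measure_subalgebra_def finite_measure_subalgebra_axioms_def
    using finite_measure_axioms by auto
  then show ?thesis by (rule finite_measure_subalgebra_is_sigma_finite)
qed

lemma integrable_IZ_bounded:
  fixes f :: "real \<times> real \<Rightarrow> real"
  assumes "f \<in> borel_measurable IZ" "\<And>z. z \<in> space IZ \<Longrightarrow> \<bar>f z\<bar> \<le> c"
  shows "integrable IZ f"
proof -
  interpret prob_space IZ by (rule prob_space_IZ)
  show ?thesis by (rule integrable_const_bound[where B=c]) (use assms in auto)
qed

locale half_invariant_set =
  fixes T0 :: "real \<Rightarrow> real" and S :: "real \<times> real \<Rightarrow> real \<times> real"
    and A :: "(real \<times> real) set" and I :: "real set"
  assumes T0: "T0 \<in> invertible_mpt IX" and S: "S \<in> invertible_mpt IZ"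
    and A: "A \<in> sets IZ" and S_A: "\<And>z. z \<in> space IZ \<Longrightarrow> S z \<in> A \<longleftrightarrow> z \<in> A"
    and I: "I \<in> sets IX" and T0_I: "\<And>x. x \<in> space IX \<Longrightarrow> T0 x \<in> I \<longleftrightarrow> x \<in> I"
    and cond_exp_A: "AE z in IZ. real_cond_exp IZ subX (indicator A) z = indicator I (fst z) / 2"
begin

definition "chi_A z = complex_of_real (indicator A z)"

definition "mixing_defect n z = cexpX (\<lambda>w. chi_A ((S ^^ n) w) * cnj (chi_A w)) z
                                - cexpX chi_A ((lift T0 ^^ n) z) * cexpX (\<lambda>w. cnj (chi_A w)) z"

lemma measurable_S_funpow [measurable]: "S ^^ n \<in> measurable IZ IZ"
  using invertible_mptD(4)[OF invertible_mpt_funpow[OF S]] .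

lemma measurable_lift_funpow [measurable]: "lift T0 ^^ n \<in> measurable IZ IZ"
  using invertible_mptD(4)[OF invertible_mpt_funpow[OF invertible_mpt_lift[OF T0]]] .

lemma sets_A [measurable]: "A \<in> sets IZ"
  by (rule A)

lemma S_funpow_A: "z \<in> space IZ \<Longrightarrow> (S ^^ n) z \<in> A \<longleftrightarrow> z \<in> A"
  by (induction n) (simp_all add: S_A funpow_in_set[OF invertible_mpt_in_space[OF S]])

lemma T0_funpow_I: "x \<in> space IX \<Longrightarrow> (T0 ^^ n) x \<in> I \<longleftrightarrow> x \<in> I"
  by (induction n) (simp_all add: T0_I funpow_in_set[OF invertible_mpt_in_space[OF T0]])

lemma real_cond_exp_zero: "AE z in IZ. real_cond_exp IZ subX (\<lambda>w. 0) z = 0"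
  by (rule sigma_finite_subalgebra.real_cond_exp_F_meas[OF sigma_finite_subalgebra_subX]) auto

lemma cexpX_chi_A: "AE z in IZ. cexpX chi_A z = complex_of_real (indicator I (fst z) / 2)"
proof -
  have re: "(\<lambda>w. Re (chi_A w)) = indicator A" and im: "(\<lambda>w. Im (chi_A w)) = (\<lambda>w. 0)"
    by (auto simp: chi_A_def)
  show ?thesis using cond_exp_A real_cond_exp_zero unfolding cexpX_def re im
    by eventually_elim (simp only: , simp)
qed

lemma cexpX_correlation:
  "AE z in IZ. cexpX (\<lambda>w. chi_A ((S ^^ n) w) * cnj (chi_A w)) z = complex_of_real (indicator I (fst z) / 2)"
proof -
  have re: "(\<lambda>w. Re (chi_A ((S ^^ n) w) * cnj (chi_A w))) = (\<lambda>w. indicator A ((S ^^ n) w) * indicator A w)"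
    and im: "(\<lambda>w. Im (chi_A ((S ^^ n) w) * cnj (chi_A w))) = (\<lambda>w. 0)"
    by (auto simp: chi_A_def)
  have "AE w in IZ. indicator A ((S ^^ n) w) * indicator A w = (indicator A w :: real)"
    using AE_space by eventually_elim (auto simp: S_funpow_A indicator_def)
  then have "AE z in IZ. real_cond_exp IZ subX (\<lambda>w. indicator A ((S ^^ n) w) * indicator A w) z
      = real_cond_exp IZ subX (indicator A) z"
    by (intro sigma_finite_subalgebra.real_cond_exp_cong[OF sigma_finite_subalgebra_subX]) auto
  with cond_exp_A real_cond_exp_zero show ?thesis
    unfolding cexpX_def re im by eventually_elim (simp only: , simp)
qed

lemma cexpX_chi_A_lift_funpow:
  "AE z in IZ. cexpX chi_A ((lift T0 ^^ n) z) = complex_of_real (indicator I (fst z) / 2)"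
proof -
  have d: "distr IZ IZ (lift T0 ^^ n) = IZ"
    using invertible_mptD(2)[OF invertible_mpt_funpow[OF invertible_mpt_lift[OF T0]]]
    by (simp add: meas_pres_def)
  have "AE z in distr IZ IZ (lift T0 ^^ n). cexpX chi_A z = complex_of_real (indicator I (fst z) / 2)"
    unfolding d by (rule cexpX_chi_A)
  then have "AE z in IZ. cexpX chi_A ((lift T0 ^^ n) z)
      = complex_of_real (indicator I (fst ((lift T0 ^^ n) z)) / 2)"
    by (rule AE_distrD[OF measurable_lift_funpow])
  moreover have "AE z in IZ. fst ((lift T0 ^^ n) z) \<in> I \<longleftrightarrow> fst z \<in> I"
    using AE_space by eventually_elim (auto simp: space_IZ space_IX lift_funpow T0_funpow_I)
  ultimately show ?thesis by eventually_elim (simp only: indicator_def)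
qed

lemma mixing_defect_AE: "AE z in IZ. mixing_defect n z = complex_of_real (indicator I (fst z) / 4)"
proof -
  have cnj_chi_A: "(\<lambda>w. cnj (chi_A w)) = chi_A" by (auto simp: chi_A_def)
  show ?thesis
    using cexpX_correlation[of n] cexpX_chi_A_lift_funpow[of n] cexpX_chi_A
    unfolding mixing_defect_def cnj_chi_A
    by eventually_elim (simp only: , cases "fst z \<in> I", simp_all add: indicator_def)
qed

lemma L2norm_mixing_defect: "L2norm (mixing_defect n) = sqrt (measure IX I) / 4"
proof -
  interpret X: prob_space IX by (rule prob_space_IX)
  have [measurable]: "I \<in> sets IX" by (rule I)
  have [measurable]: "fst \<in> measurable IZ IX" by (rule measurable_fst_IZ)
  have "mixing_defect n \<in> borel_measurable IZ" unfolding mixing_defect_def[abs_def] cexpX_def by measurable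
  then have "(\<lambda>z. (cmod (mixing_defect n z))\<^sup>2) \<in> borel_measurable IZ" by measurable
  moreover have "AE z in IZ. (cmod (mixing_defect n z))\<^sup>2 = indicator I (fst z) / 16"
    using mixing_defect_AE[of n]
    by eventually_elim (simp only: , cases "fst z \<in> I", simp_all add: indicator_def power2_eq_square)
  ultimately have "(\<integral>z. (cmod (mixing_defect n z))\<^sup>2 \<partial>IZ) = (\<integral>z. indicator I (fst z) / 16 \<partial>IZ)"
    by (intro integral_cong_AE) auto
  also have "\<dots> = (\<integral>z. indicator (I \<times> space IX) z / 16 \<partial>IZ)"
    by (rule Bochner_Integration.integral_cong) (auto simp: indicator_def space_IZ space_IX)
  also have "\<dots> = measure IZ (I \<times> space IX) / 16"
    using sets_IZ_Times[OF I sets.top] by (simp add: Int_absorb2 sets.sets_into_space)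
  also have "\<dots> = measure IX I / 16" using measure_IZ_Times[OF I sets.top] X.prob_space by simp
  finally have "(\<integral>z. (cmod (mixing_defect n z))\<^sup>2 \<partial>IZ) = measure IX I / 16" .
  moreover have "sqrt 16 = (4::real)" by (rule real_sqrt_unique) auto
  ultimately show ?thesis unfolding L2norm_def by (simp only: real_sqrt_divide)
qed

lemma L2_rel_chi_A: "L2_rel chi_A"
  unfolding L2_rel_def
proof (intro conjI)
  interpret Z: prob_space IZ by (rule prob_space_IZ)
  show "chi_A \<in> borel_measurable IZ" unfolding chi_A_def[abs_def] by measurable
  have sq: "(\<lambda>z. (cmod (chi_A z))\<^sup>2) = indicator A" by (auto simp: chi_A_def indicator_def)
  show "integrable IZ (\<lambda>z. (cmod (chi_A z))\<^sup>2)" unfolding sq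
    by (intro integrable_real_indicator) (auto simp: Z.emeasure_finite less_top[symmetric])
  have "AE z in IZ. sqrt (real_cond_exp IZ subX (\<lambda>w. (cmod (chi_A w))\<^sup>2) z) \<le> 1"
    using cond_exp_A unfolding sq
    by eventually_elim (simp only: , cases "fst z \<in> I", simp_all add: indicator_def)
  then show "\<exists>C. AE z in IZ. sqrt (real_cond_exp IZ subX (\<lambda>w. (cmod (chi_A w))\<^sup>2) z) \<le> C" by blast
qed

lemma not_strongly_mixing_ext:
  assumes "measure IX I > 0"
  shows "\<not> strongly_mixing_ext T0 S"
proof
  assume "strongly_mixing_ext T0 S"
  then have "(\<lambda>n. L2norm (mixing_defect n)) \<longlonglongrightarrow> 0"
    using L2_rel_chi_A unfolding strongly_mixing_ext_def mixing_defect_def[abs_def] by blast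
  then have "sqrt (measure IX I) / 4 = 0" by (simp add: L2norm_mixing_defect LIMSEQ_const_iff)
  with assms show False by simp
qed

end

section \<open>Straightening an extension along the returns to a small set\<close>

locale straightening =
  fixes T0 :: "real \<Rightarrow> real" and T :: "real \<times> real \<Rightarrow> real \<times> real"
    and g :: "real \<Rightarrow> real \<Rightarrow> real" and B :: "real set"
  assumes T0: "T0 \<in> invertible_mpt IX" and T: "T \<in> invertible_mpt IZ"
    and T_skew: "skew_product T0 T g" and B: "B \<in> sets IX"
begin

definition "T0_inv = the_inv_into (space IX) T0"
definition "I = recurrent_set IX T0 B"
definition "hit x = (LEAST k. (T0 ^^ k) x \<in> B)"

text \<open>The space is cut into \<open>(X - I) \<times> Y\<close> (piece \<open>0\<close>) and the sets where the hitting time of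
  \<open>B\<close> is \<open>k\<close> (piece \<open>Suc k\<close>); on the latter, \<open>\<Psi>\<close> applies the fibre part of \<open>T\<^sup>k\<close>.\<close>

definition "piece x = (if x \<in> I then Suc (hit x) else 0)"
definition "piece_map i = (case i of 0 \<Rightarrow> (\<lambda>z. z) | Suc k \<Rightarrow> (\<lambda>z. (lift T0_inv ^^ k) ((T ^^ k) z)))"
definition "\<Psi> z = piece_map (piece (fst z)) z"
definition "\<Psi>_inv = the_inv_into (space IZ) \<Psi>"
definition "\<Psi>_conj z = \<Psi>_inv (lift T0 (\<Psi> z))"
definition "perturbed z = (if fst z \<in> I then \<Psi>_conj z else T z)"
definition "half_set = \<Psi> -` (I \<times> {0..1/2}) \<inter> space IZ"

lemma T0_in_space: "x \<in> space IX \<Longrightarrow> T0 x \<in> space IX"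
  by (rule invertible_mpt_in_space[OF T0])

lemma measurable_T0 [measurable]: "T0 \<in> measurable IX IX"
  by (rule invertible_mptD(4)[OF T0])

lemma sets_B [measurable]: "B \<in> sets IX"
  by (rule B)

lemma sets_I [measurable]: "I \<in> sets IX"
  unfolding I_def by (rule sets_recurrent_set[OF measurable_T0 B])

lemma I_in_space: "x \<in> I \<Longrightarrow> x \<in> space IX"
  by (simp add: I_def recurrent_set_def)

lemma T0_I:
  assumes "x \<in> space IX"
  shows "T0 x \<in> I \<longleftrightarrow> x \<in> I"
  unfolding I_def by (rule recurrent_set_step[of x IX T0, OF assms T0_in_space[OF assms]])

lemma measure_I_ge: "measure IX B \<le> measure IX I"
  unfolding I_def using prob_space_IX
  by (intro measure_le_recurrent_set invertible_mptD(2)[OF T0] B) (simp add: prob_space_def)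

lemma hit_iff: "x \<in> I \<Longrightarrow> hit x = k \<longleftrightarrow> (T0 ^^ k) x \<in> B \<and> (\<forall>j<k. (T0 ^^ j) x \<notin> B)"
proof -
  assume "x \<in> I"
  have "(T0 ^^ hit x) x \<in> B"
    unfolding hit_def by (rule LeastI_ex) (use \<open>x \<in> I\<close> in \<open>auto simp: I_def recurrent_set_def\<close>)
  moreover have "(T0 ^^ j) x \<notin> B" if "j < hit x" for j
    using that unfolding hit_def by (rule not_less_Least)
  ultimately show ?thesis by (metis linorder_neqE_nat)
qed

lemma hit_step:
  assumes x: "x \<in> I" and "x \<notin> B"
  shows "hit x = Suc (hit (T0 x))"
proof -
  have Tx: "T0 x \<in> I" using T0_I[OF I_in_space[OF x]] x by simp
  obtain m where m: "hit x = Suc m"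
    using hit_iff[OF x, of 0] \<open>x \<notin> B\<close> by (cases "hit x") auto
  then have "(T0 ^^ m) (T0 x) \<in> B \<and> (\<forall>j<m. (T0 ^^ j) (T0 x) \<notin> B)"
    using hit_iff[OF x, of "Suc m"] by (auto simp: funpow_swap1)
  then have "hit (T0 x) = m" using hit_iff[OF Tx] by simp
  with m show ?thesis by simp
qed

lemma measurable_piece: "piece \<in> measurable IX (count_space UNIV)"
  unfolding measurable_count_space_eq2_countable
proof safe
  fix n :: nat
  show "piece -` {n} \<inter> space IX \<in> sets IX"
  proof (cases n)
    case 0
    then have "piece -` {n} \<inter> space IX = space IX - I" unfolding piece_def by auto
    then show ?thesis by auto
  next
    case (Suc k)
    have "piece -` {n} \<inter> space IX = I \<inter> {x \<in> space IX. (T0 ^^ k) x \<in> B \<and> (\<forall>j<k. (T0 ^^ j) x \<notin> B)}"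
    proof (rule set_eqI)
      fix x
      show "x \<in> piece -` {n} \<inter> space IX \<longleftrightarrow>
          x \<in> I \<inter> {x \<in> space IX. (T0 ^^ k) x \<in> B \<and> (\<forall>j<k. (T0 ^^ j) x \<notin> B)}"
        unfolding piece_def Suc by (cases "x \<in> I") (auto simp: hit_iff I_in_space)
    qed
    also have "\<dots> \<in> sets IX" by measurable
    finally show ?thesis .
  qed
qed simp

lemma T0_inv_funpow: "x \<in> space IX \<Longrightarrow> (T0_inv ^^ k) ((T0 ^^ k) x) = x"
proof (induction k arbitrary: x)
  case (Suc k)
  have "(T0_inv ^^ Suc k) ((T0 ^^ Suc k) x) = (T0_inv ^^ k) (T0_inv (T0 ((T0 ^^ k) x)))"
    by (simp add: funpow_swap1)
  also have "\<dots> = (T0_inv ^^ k) ((T0 ^^ k) x)"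
    using invertible_mpt_the_inv_f[OF T0 funpow_in_set[OF T0_in_space Suc.prems]]
    by (simp add: T0_inv_def)
  finally show ?case using Suc by simp
qed simp

lemma piece_map_Suc: "z \<in> space IZ \<Longrightarrow> piece_map (Suc k) z = (fst z, snd ((T ^^ k) z))"
  using skew_productD(1)[OF skew_product_funpow[OF T_skew T0_in_space]]
  by (auto simp: piece_map_def space_IZ space_IX lift_funpow T0_inv_funpow)

lemma fst_piece_map: "z \<in> space IZ \<Longrightarrow> fst (piece_map i z) = fst z"
  by (cases i) (simp_all add: piece_map_Suc, simp add: piece_map_def)

lemma invertible_mpt_piece_map: "piece_map i \<in> invertible_mpt IZ"
proof (cases i)
  case (Suc k)
  have "T0_inv \<in> invertible_mpt IX" unfolding T0_inv_def by (rule invertible_mpt_the_inv[OF T0])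
  then show ?thesis unfolding piece_map_def Suc
    by (simp add: invertible_mpt_comp invertible_mpt_funpow invertible_mpt_lift T)
qed (simp add: piece_map_def invertible_mpt_id)

lemma skew_product_piece_map: "\<exists>h. skew_product (\<lambda>x. x) (piece_map i) h"
proof (cases i)
  case (Suc k)
  have T0_inv: "x \<in> space IX \<Longrightarrow> T0_inv x \<in> space IX" for x
    unfolding T0_inv_def by (rule invertible_mpt_the_inv_in_space[OF T0])
  have "skew_product (\<lambda>x. (T0_inv ^^ k) ((T0 ^^ k) x)) (\<lambda>z. (lift T0_inv ^^ k) ((T ^^ k) z))
      (\<lambda>x y. cocycle (\<lambda>x y. y) T0_inv k ((T0 ^^ k) x) (cocycle g T0 k x y))"
    by (rule skew_product_comp[OF skew_product_funpow[OF skew_product_lift T0_inv]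
          skew_product_funpow[OF T_skew T0_in_space] funpow_in_set[OF T0_in_space]])
  then have "skew_product (\<lambda>x. x) (piece_map i)
      (\<lambda>x y. cocycle (\<lambda>x y. y) T0_inv k ((T0 ^^ k) x) (cocycle g T0 k x y))"
    by (rule skew_product_cong) (auto simp: piece_map_def Suc T0_inv_funpow)
  then show ?thesis by blast
qed (use skew_product_id in \<open>auto simp: piece_map_def\<close>)

lemma fst_\<Psi>: "z \<in> space IZ \<Longrightarrow> fst (\<Psi> z) = fst z"
  unfolding \<Psi>_def by (rule fst_piece_map)

lemma \<Psi>_eq: "z \<in> space IZ \<Longrightarrow> fst z \<in> I \<Longrightarrow> \<Psi> z = (fst z, snd ((T ^^ hit (fst z)) z))"
  unfolding \<Psi>_def piece_def by (simp add: piece_map_Suc)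

lemma invertible_mpt_\<Psi>: "\<Psi> \<in> invertible_mpt IZ"
proof -
  have "(\<lambda>z. piece (fst z)) \<in> measurable IZ (count_space UNIV)"
    using measurable_compose[OF measurable_fst_IZ measurable_piece] by (simp add: comp_def)
  then show ?thesis unfolding \<Psi>_def
    by (rule invertible_mpt_piecewise[OF invertible_mpt_piece_map]) (simp_all add: fst_piece_map)
qed

lemma invertible_mpt_\<Psi>_inv: "\<Psi>_inv \<in> invertible_mpt IZ"
  unfolding \<Psi>_inv_def by (rule invertible_mpt_the_inv[OF invertible_mpt_\<Psi>])

lemma skew_product_\<Psi>: "\<exists>h. skew_product (\<lambda>x. x) \<Psi> h"
proof -
  obtain h where "\<And>i. skew_product (\<lambda>x. x) (piece_map i) (h i)"
    using skew_product_piece_map by metis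
  then have "skew_product (\<lambda>x. x) (\<lambda>z. piece_map (piece (fst z)) z) (\<lambda>x. h (piece x) x)"
    by (rule skew_product_piecewise) auto
  then show ?thesis unfolding \<Psi>_def[abs_def] by blast
qed

lemma skew_product_\<Psi>_inv: "\<exists>h. skew_product (\<lambda>x. x) \<Psi>_inv h"
  using skew_product_the_inv[OF invertible_mpt_\<Psi>] skew_product_\<Psi> unfolding \<Psi>_inv_def by blast

lemma \<Psi>_\<Psi>_inv: "z \<in> space IZ \<Longrightarrow> \<Psi> (\<Psi>_inv z) = z"
  unfolding \<Psi>_inv_def by (rule invertible_mpt_f_the_inv[OF invertible_mpt_\<Psi>])

lemma \<Psi>_inv_\<Psi>: "z \<in> space IZ \<Longrightarrow> \<Psi>_inv (\<Psi> z) = z"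
  unfolding \<Psi>_inv_def by (rule invertible_mpt_the_inv_f[OF invertible_mpt_\<Psi>])

lemma perturbed_eq_T:
  assumes z: "z \<in> space IZ" and "fst z \<notin> I \<inter> B"
  shows "perturbed z = T z"
proof (cases "fst z \<in> I")
  case True
  with assms have "fst z \<notin> B" by auto
  have Tz: "T z \<in> space IZ" by (rule invertible_mpt_in_space[OF T z])
  have "fst (T z) = T0 (fst z)" by (rule skew_product_fst[OF T_skew z])
  moreover have "T0 (fst z) \<in> I" using T0_I True I_in_space by blast
  moreover have "hit (fst z) = Suc (hit (T0 (fst z)))" by (rule hit_step[OF True \<open>fst z \<notin> B\<close>])
  ultimately have "\<Psi> (T z) = lift T0 (\<Psi> z)"
    using \<Psi>_eq[OF Tz] \<Psi>_eq[OF z True] by (simp add: funpow_swap1 lift_def)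
  then show ?thesis using True \<Psi>_inv_\<Psi>[OF Tz] by (simp add: perturbed_def \<Psi>_conj_def)
qed (simp add: perturbed_def)

lemma invertible_mpt_\<Psi>_conj: "\<Psi>_conj \<in> invertible_mpt IZ"
  unfolding \<Psi>_conj_def[abs_def]
  by (rule invertible_mpt_comp[OF invertible_mpt_\<Psi>_inv invertible_mpt_comp[OF invertible_mpt_lift[OF T0] invertible_mpt_\<Psi>]])

lemma skew_product_\<Psi>_conj: "\<exists>h. skew_product T0 \<Psi>_conj h"
proof -
  obtain h1 h2 where h1: "skew_product (\<lambda>x. x) \<Psi> h1" and h2: "skew_product (\<lambda>x. x) \<Psi>_inv h2"
    using skew_product_\<Psi> skew_product_\<Psi>_inv by blast
  have "skew_product (\<lambda>x. T0 x) (\<lambda>z. lift T0 (\<Psi> z)) (\<lambda>x y. h1 x y)"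
    using skew_product_comp[OF skew_product_lift h1] by simp
  then have "skew_product (\<lambda>x. T0 x) \<Psi>_conj (\<lambda>x y. h2 (T0 x) (h1 x y))"
    unfolding \<Psi>_conj_def[abs_def] using skew_product_comp[OF h2 _ T0_in_space] by simp
  then show ?thesis by (auto simp: eta_contract_eq)
qed

lemma fst_\<Psi>_conj:
  assumes z: "z \<in> space IZ"
  shows "fst (\<Psi>_conj z) = T0 (fst z)"
proof -
  have w: "lift T0 (\<Psi> z) \<in> space IZ"
    by (rule invertible_mpt_in_space[OF invertible_mpt_lift[OF T0] invertible_mpt_in_space[OF invertible_mpt_\<Psi> z]])
  have "fst (\<Psi>_conj z) = fst (lift T0 (\<Psi> z))"
    unfolding \<Psi>_conj_def using fst_\<Psi>[OF invertible_mpt_in_space[OF invertible_mpt_\<Psi>_inv w]] \<Psi>_\<Psi>_inv[OF w] by simp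
  also have "\<dots> = T0 (fst z)" using fst_\<Psi>[OF z] by (cases "\<Psi> z") simp
  finally show ?thesis .
qed

lemma
  shows invertible_mpt_perturbed: "perturbed \<in> invertible_mpt IZ"
    and perturbed_extension: "perturbed \<in> extensions T0"
proof -
  define G where "G i = (if i = (1::nat) then \<Psi>_conj else T)" for i
  define \<iota> where "\<iota> x = (if x \<in> I then (1::nat) else 0)" for x
  have perturbed: "perturbed = (\<lambda>z. G (\<iota> (fst z)) z)"
    by (auto simp: perturbed_def G_def \<iota>_def)
  obtain h where "skew_product T0 \<Psi>_conj h" using skew_product_\<Psi>_conj by blast
  then have "skew_product T0 (G i) (if i = 1 then h else g)" for i
    using T_skew unfolding G_def by simp
  then have "skew_product T0 perturbed (\<lambda>x. (if \<iota> x = 1 then h else g) x)"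
    unfolding perturbed by (rule skew_product_piecewise) (rule refl)
  have G: "G i \<in> invertible_mpt IZ" for i
    using invertible_mpt_\<Psi>_conj T by (simp add: G_def)
  have "\<iota> \<in> measurable IX (count_space UNIV)"
    unfolding \<iota>_def by measurable
  then have \<iota>: "(\<lambda>z. \<iota> (fst z)) \<in> measurable IZ (count_space UNIV)"
    by (rule measurable_compose[OF measurable_fst_IZ])
  have "\<iota> (fst (G i z)) = i \<longleftrightarrow> \<iota> (fst z) = i" if "z \<in> space IZ" for i z
    using that fst_\<Psi>_conj skew_product_fst[OF T_skew] T0_I[of "fst z"]
    by (auto simp: G_def \<iota>_def space_IZ space_IX)
  then show "perturbed \<in> invertible_mpt IZ"
    unfolding perturbed by (rule invertible_mpt_piecewise[OF G \<iota>])
  with \<open>skew_product T0 perturbed _\<close> show "perturbed \<in> extensions T0"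
    unfolding extensions_skew_product by blast
qed

lemma measure_symdiff_perturbed_le:
  assumes "E \<in> sets IZ"
  shows "measure IZ ((perturbed ` E - T ` E) \<union> (T ` E - perturbed ` E)) \<le> 2 * measure IX B"
proof -
  interpret X: prob_space IX by (rule prob_space_IX)
  have D: "(I \<inter> B) \<times> space IX \<in> sets IZ" by (rule sets_IZ_Times) auto
  have "measure IZ ((perturbed ` E - T ` E) \<union> (T ` E - perturbed ` E)) \<le> 2 * measure IZ ((I \<inter> B) \<times> space IX)"
    using prob_space_IZ
    by (intro measure_image_symdiff_le invertible_mpt_perturbed T D assms perturbed_eq_T)
      (auto simp: prob_space_def space_IZ space_IX)
  also have "\<dots> = 2 * measure IX (I \<inter> B)"
    using measure_IZ_Times[of "I \<inter> B" "space IX"] X.prob_space by simp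
  also have "\<dots> \<le> 2 * measure IX B" by (simp add: X.finite_measure_mono)
  finally show ?thesis .
qed

lemma sets_half_set [measurable]: "half_set \<in> sets IZ"
  unfolding half_set_def
  by (rule measurable_sets[OF invertible_mptD(4)[OF invertible_mpt_\<Psi>] sets_IZ_Times[OF sets_I]])
    (rule sets_IX_atLeastAtMost, simp_all)

lemma perturbed_half_set:
  assumes z: "z \<in> space IZ"
  shows "perturbed z \<in> half_set \<longleftrightarrow> z \<in> half_set"
proof (cases "fst z \<in> I")
  case True
  have w: "lift T0 (\<Psi> z) \<in> space IZ"
    by (rule invertible_mpt_in_space[OF invertible_mpt_lift[OF T0] invertible_mpt_in_space[OF invertible_mpt_\<Psi> z]])
  have "\<Psi> (perturbed z) = lift T0 (\<Psi> z)" using True \<Psi>_\<Psi>_inv[OF w] by (simp add: perturbed_def \<Psi>_conj_def)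
  moreover have "fst (\<Psi> z) \<in> space IX"
    using invertible_mpt_in_space[OF invertible_mpt_\<Psi> z] by (auto simp: space_IZ space_IX)
  then have "lift T0 (\<Psi> z) \<in> I \<times> {0..1/2} \<longleftrightarrow> \<Psi> z \<in> I \<times> {0..1/2}"
    using T0_I by (cases "\<Psi> z") auto
  ultimately show ?thesis
    unfolding half_set_def using invertible_mpt_in_space[OF invertible_mpt_perturbed z] z by auto
next
  case False
  then have "fst (\<Psi> (perturbed z)) \<notin> I"
    using fst_\<Psi>[OF invertible_mpt_in_space[OF invertible_mpt_perturbed z]]
      skew_product_fst[OF T_skew z] T0_I[of "fst z"] z
    by (auto simp: perturbed_def space_IZ space_IX)
  moreover have "fst (\<Psi> z) \<notin> I" using False fst_\<Psi>[OF z] by simp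
  ultimately show ?thesis unfolding half_set_def by auto
qed

text \<open>Since \<open>\<Psi>\<close> preserves the measure and the fibres, the conditional measure of \<open>half_set\<close>
  over the base is that of \<open>I \<times> [0, 1/2]\<close>.\<close>

lemma real_cond_exp_half_set:
  "AE z in IZ. real_cond_exp IZ subX (indicator half_set) z = indicator I (fst z) / 2"
proof (rule sigma_finite_subalgebra.real_cond_exp_charact[OF sigma_finite_subalgebra_subX])
  interpret Z: prob_space IZ by (rule prob_space_IZ)
  interpret X: prob_space IX by (rule prob_space_IX)
  have half: "{0..1/2} \<in> sets IX" "measure IX {0..1/2::real} = 1/2"
    using sets_IX_atLeastAtMost[of "1/2"] measure_IX_atLeastAtMost[of "1/2"] by auto
  show "(\<lambda>z. indicator I (fst z) / 2 :: real) \<in> borel_measurable subX"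
    using measurable_compose[OF measurable_fst_subX, of "\<lambda>x. indicator I x / 2 :: real"]
    by (simp add: comp_def)
  have [measurable]: "fst \<in> measurable IZ IX" by (rule measurable_fst_IZ)
  show "integrable IZ (\<lambda>z. indicator I (fst z) / 2 :: real)"
    by (rule integrable_IZ_bounded[of _ 1]) (auto simp: indicator_def)
  show "integrable IZ (indicator half_set :: _ \<Rightarrow> real)"
    by (intro integrable_real_indicator) (auto simp: Z.emeasure_finite less_top[symmetric])
  fix Cs assume "Cs \<in> sets subX"
  then obtain C where C: "C \<in> sets IX" "Cs = fst -` C \<inter> space IZ" unfolding sets_subX by auto
  have CI: "C \<inter> I \<in> sets IX" using C by auto
  have "(\<integral>z\<in>Cs. indicator half_set z \<partial>IZ) = measure IZ (Cs \<inter> half_set)"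
    using C sets.sets_into_space[OF sets_half_set]
    by (simp add: set_lebesgue_integral_def indicator_inter_arith[symmetric] Int_absorb2 Int_assoc)
  also have "Cs \<inter> half_set = \<Psi> -` ((C \<inter> I) \<times> {0..1/2}) \<inter> space IZ"
    unfolding C half_set_def using fst_\<Psi> by force
  also have "measure IZ \<dots> = measure IZ ((C \<inter> I) \<times> {0..1/2})"
    using meas_pres_emeasure[OF invertible_mptD(2)[OF invertible_mpt_\<Psi>] sets_IZ_Times[OF CI half(1)]]
    by (simp add: measure_def)
  also have "\<dots> = measure IX (C \<inter> I) / 2" using measure_IZ_Times[OF CI half(1)] half(2) by simp
  also have "\<dots> = measure IZ ((C \<inter> I) \<times> space IX) / 2"
    using measure_IZ_Times[OF CI sets.top] X.prob_space by simp
  also have "\<dots> = (\<integral>z. (indicator ((C \<inter> I) \<times> space IX) z :: real) / 2 \<partial>IZ)"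
    using sets_IZ_Times[OF CI sets.top] by (simp add: Int_absorb2 sets.sets_into_space)
  also have "\<dots> = (\<integral>z\<in>Cs. (indicator I (fst z) :: real) / 2 \<partial>IZ)"
    unfolding set_lebesgue_integral_def C
    by (rule Bochner_Integration.integral_cong) (auto simp: indicator_def space_IZ space_IX)
  finally show "(\<integral>z\<in>Cs. indicator half_set z \<partial>IZ) = (\<integral>z\<in>Cs. (indicator I (fst z) :: real) / 2 \<partial>IZ)" .
qed

lemma not_strongly_mixing_perturbed:
  assumes "measure IX B > 0"
  shows "\<not> strongly_mixing_ext T0 perturbed"
proof -
  interpret half_invariant_set T0 perturbed half_set I
    by unfold_locales (use T0 invertible_mpt_perturbed perturbed_half_set T0_I
        real_cond_exp_half_set in auto)
  show ?thesis using not_strongly_mixing_ext measure_I_ge assms by simp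
qed

lemma perturbed_in_weak_nbhd:
  assumes "F \<subseteq> sets IZ" "2 * measure IX B < e"
  shows "perturbed \<in> weak_nbhd IZ T F e"
  unfolding weak_nbhd_def
proof (intro CollectI conjI ballI)
  fix E assume "E \<in> F"
  with assms(1) have "E \<in> sets IZ" by auto
  from measure_symdiff_perturbed_le[OF this] assms(2)
  show "measure IZ ((perturbed ` E - T ` E) \<union> (T ` E - perturbed ` E)) < e" by simp
qed (rule invertible_mpt_perturbed)

end

lemma openin_weak_topology: "openin (weak_topology W) = weak_open W"
  unfolding weak_topology_def by (rule topology_inverse'[OF istopology_weak_open])

lemma topspace_weak_topology: "topspace (weak_topology W) = invertible_mpt W"
proof -
  have "weak_open W (invertible_mpt W)"
    unfolding weak_open_def
    by (auto intro!: exI[of _ "{}"] exI[of _ 1] simp: weak_nbhd_def)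
  then show ?thesis unfolding topspace_def openin_weak_topology by (auto simp: weak_open_def)
qed

lemma in_weak_closure_ofI:
  assumes T: "T \<in> K" and K: "K \<subseteq> invertible_mpt W" and D: "D \<subseteq> K"
    and approx: "\<And>F e. finite F \<Longrightarrow> F \<subseteq> sets W \<Longrightarrow> e > 0 \<Longrightarrow> \<exists>S\<in>D. S \<in> weak_nbhd W T F e"
  shows "T \<in> (subtopology (weak_topology W) K) closure_of D"
  unfolding in_closure_of
proof (intro conjI allI impI)
  show "T \<in> topspace (subtopology (weak_topology W) K)"
    using T K by (auto simp: topspace_weak_topology)
  fix V assume "T \<in> V \<and> openin (subtopology (weak_topology W) K) V"
  then obtain V' where V': "weak_open W V'" "V = V' \<inter> K" "T \<in> V'"
    unfolding openin_subtopology openin_weak_topology by blast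
  then obtain F e where "finite F" "F \<subseteq> sets W" "e > 0" "weak_nbhd W T F e \<subseteq> V'"
    unfolding weak_open_def by meson
  then obtain S where "S \<in> D" "S \<in> V'" using approx by blast
  with D V'(2) show "\<exists>S. S \<in> D \<and> S \<in> V" by blast
qed

theorem proposition3p5:
  assumes "T0 \<in> invertible_mpt IX"
    and "antiperiodic IX T0"
  shows "extensions T0 \<subseteq>
           (subtopology (weak_topology IZ) (extensions T0)) closure_of
             (extensions T0 - strongly_mixing_exts T0)"
proof
  fix T assume T: "T \<in> extensions T0"
  then obtain g where "T \<in> invertible_mpt IZ" "skew_product T0 T g"
    unfolding extensions_skew_product by blast
  show "T \<in> (subtopology (weak_topology IZ) (extensions T0)) closure_of
      (extensions T0 - strongly_mixing_exts T0)"
  proof (rule in_weak_closure_ofI[OF T])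
    fix F and e :: real assume F: "F \<subseteq> sets IZ" and "e > 0"
    define d where "d = min (e / 4) (1 / 2)"
    have d: "0 < d" "d \<le> 1" "2 * d < e" using \<open>e > 0\<close> by (auto simp: d_def)
    interpret straightening T0 T g "{0..d}"
      by unfold_locales (use assms(1) \<open>T \<in> invertible_mpt IZ\<close> \<open>skew_product T0 T g\<close>
          sets_IX_atLeastAtMost d in auto)
    show "\<exists>S \<in> extensions T0 - strongly_mixing_exts T0. S \<in> weak_nbhd IZ T F e"
      using perturbed_extension not_strongly_mixing_perturbed perturbed_in_weak_nbhd[OF F]
        measure_IX_atLeastAtMost[of d] d
      by (auto simp: strongly_mixing_exts_def)
  qed (auto simp: extensions_def strongly_mixing_exts_def)
qed

end
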